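(* Let $T:X\to X$ be a continuous map on a compact metric space $X$ such that $\mathcal M^p_T(X)$ is dense in $\mathcal M_T(X)$. Let $\varphi=(\varphi_1,\ldots,\varphi_d)\in C(X,\mathbb R^d)$ and $h\in\operatorname{int}(\mathrm{Rot}(\varphi))$. Then $\mathrm{rv}_\varphi^{-1}(h)\cap\mathcal N_T$ is dense in $\mathrm{rv}_\varphi^{-1}(h)$.
   Context: $\mathcal M_T(X)$ is the set of $T$-invariant Borel probability measures with the weak* topology; $\mathcal M^p_T(X)$ is the set of invariant measures supported on a single periodic orbit. For $\mu\in\mathcal M_T(X)$, $\mathrm{rv}_\varphi(\mu)=(\int\varphi_1d\mu,\dots,\int\varphi_dd\mu)$, $\mathrm{Rot}(\varphi)=\{\mathrm{rv}_\varphi(\mu):\mu\in\mathcal M_T(X)\}\subset\mathbb R^d$, and $\mathrm{rv}_\varphi^{-1}(h)\subset \mathcal M_T(X)$ carries the subspace topology. Let $\Delta^{d+1}=\{(\lambda_1,\dots,\lambda_{d+1})\in(0,1)^{d+1}:\sum\lambda_i=1\}$. $\mathcal N_T$ is the set of measures $\sum_{i=1}^{d+1}\lambda_i\mu_i$ with $\mu_i\in\mathcal M^p_T(X)$, $(\lambda_1,\dots,\lambda_{d+1})\in\Delta^{d+1}$, and such that the vectors $\mathrm{rv}_\varphi(\mu_i)-\mathrm{rv}_\varphi(\mu_{d+1})$, $i=1,\dots,d$, span $\mathbb R^d$. *)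

theory Defs
  imports "HOL-Analysis.Analysis" "HOL-Probability.Probability"
begin

text \<open>The compact metric space X is the whole (nonempty) type 'a, with compact UNIV.
  Borel probability measures on X are measures M with sets M = sets borel and prob_space M.\<close>

definition invariant_measures :: "('a::metric_space \<Rightarrow> 'a) \<Rightarrow> 'a measure set" where
  "invariant_measures T = {M. sets M = sets borel \<and> prob_space M \<and>
      (\<forall>A \<in> sets borel. emeasure M (T -` A) = emeasure M A)}"

definition periodic_measures :: "('a::metric_space \<Rightarrow> 'a) \<Rightarrow> 'a measure set" where
  "periodic_measures T = {M \<in> invariant_measures T. \<exists>x n. n > 0 \<and> (T ^^ n) x = x \<and>
      emeasure M {(T ^^ k) x | k. k < n} = 1}"

definition weak_star_topology :: "'a::metric_space measure topology" where
  "weak_star_topology = topology_generated_by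
      {{M. integral\<^sup>L M f \<in> U} | f U. continuous_on UNIV f \<and> open (U :: real set)}"

definition rot_vec :: "('a::metric_space \<Rightarrow> real ^ 'd) \<Rightarrow> 'a measure \<Rightarrow> real ^ 'd" where
  "rot_vec \<phi> M = (\<chi> i. integral\<^sup>L M (\<lambda>x. \<phi> x $ i))"

definition Rot :: "('a::metric_space \<Rightarrow> 'a) \<Rightarrow> ('a \<Rightarrow> real ^ 'd) \<Rightarrow> (real ^ 'd) set" where
  "Rot T \<phi> = rot_vec \<phi> ` invariant_measures T"

definition rot_preimage :: "('a::metric_space \<Rightarrow> 'a) \<Rightarrow> ('a \<Rightarrow> real ^ 'd) \<Rightarrow> real ^ 'd \<Rightarrow> 'a measure set" where
  "rot_preimage T \<phi> h = {M \<in> invariant_measures T. rot_vec \<phi> M = h}"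

text \<open>The set N_T, with d = CARD('d); the measures are indexed 0..d
  (index d playing the role of d+1 in the paper).\<close>
definition N_set :: "('a::metric_space \<Rightarrow> 'a) \<Rightarrow> ('a \<Rightarrow> real ^ 'd) \<Rightarrow> 'a measure set" where
  "N_set T \<phi> = {M. \<exists>(\<nu> :: nat \<Rightarrow> 'a measure) (lam :: nat \<Rightarrow> real).
      (\<forall>i \<le> CARD('d). \<nu> i \<in> periodic_measures T \<and> 0 < lam i) \<and>
      (\<Sum>i\<le>CARD('d). lam i) = 1 \<and>
      span {rot_vec \<phi> (\<nu> i) - rot_vec \<phi> (\<nu> CARD('d)) | i. i < CARD('d)} = UNIV \<and>
      sets M = sets borel \<and>
      (\<forall>A \<in> sets borel. emeasure M A = (\<Sum>i\<le>CARD('d). ennreal (lam i) * emeasure (\<nu> i) A))}"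

end

theory Submission
  imports Defs
begin

text \<open>Let \<open>\<mu>\<close> have rotation vector \<open>h\<close> and fix a basic weak* neighbourhood of \<open>\<mu>\<close>, given by
  finitely many continuous functions and a tolerance. Since \<open>h\<close> is interior to \<open>Rot(\<phi>)\<close>, there
  are invariant measures \<open>m\<^sub>0, ..., m\<^sub>d\<close> whose rotation vectors are the vertices \<open>h + R v\<^sub>i\<close> of
  a simplex around \<open>h\<close>. For small \<open>t\<close> the mixtures \<open>\<rho>\<^sub>i = (1 - t) \<mu> + t m\<^sub>i\<close> lie in the
  neighbourhood, and their rotation vectors \<open>h + t R v\<^sub>i\<close> still surround \<open>h\<close>. By density each
  \<open>\<rho>\<^sub>i\<close> is approximated, also on the components of \<open>\<phi>\<close>, by a periodic measure \<open>\<nu>\<^sub>i\<close>; the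
  rotation vectors of the \<open>\<nu>\<^sub>i\<close> are then so close to the vertices that \<open>h\<close> stays in the
  interior of their convex hull. Its barycentric coordinates \<open>\<lambda>\<^sub>i > 0\<close> give the measure
  \<open>\<Sum> \<lambda>\<^sub>i \<nu>\<^sub>i\<close> in \<open>N\<^sub>T\<close> with rotation vector \<open>h\<close>, which lies in the neighbourhood because
  basic neighbourhoods are convex.\<close>

section \<open>Barycentric coordinates near a simplex\<close>

text \<open>The vertices \<open>e\<^sub>1, ..., e\<^sub>d, -(e\<^sub>1 + ... + e\<^sub>d)\<close> of a simplex with \<open>0\<close> in its interior;
  \<open>idx\<close> enumerates the coordinates.\<close>
definition simplex_vertex :: "(nat \<Rightarrow> 'd::finite) \<Rightarrow> nat \<Rightarrow> real ^ 'd" where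
  "simplex_vertex idx i = (if i < CARD('d) then axis (idx i) 1 else - (\<chi> k. 1))"

lemma norm_simplex_vertex_le: "norm (simplex_vertex idx i :: real ^ 'd) \<le> CARD('d)"
proof (cases "i < CARD('d)")
  case False
  have "norm ((\<chi> k. 1) :: real ^ 'd) \<le> (\<Sum>k\<in>UNIV. \<bar>((\<chi> k. 1) :: real ^ 'd) $ k\<bar>)"
    by (rule norm_le_l1_cart)
  then show ?thesis using False by (simp add: simplex_vertex_def)
qed (simp add: simplex_vertex_def)

lemma simplex_vertex_margin:
  fixes v :: "real ^ 'd"
  assumes idx: "bij_betw idx {..<CARD('d)} UNIV"
  shows "\<exists>i\<le>CARD('d). norm v / (real CARD('d) * (real CARD('d) + 1)) \<le> v \<bullet> simplex_vertex idx i"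
proof -
  define d where "d = CARD('d)"
  have "0 < d" unfolding d_def by simp
  obtain k where k: "\<And>j. \<bar>v $ j\<bar> \<le> \<bar>v $ k\<bar>"
  proof -
    have "finite (range (\<lambda>j. \<bar>v $ j\<bar>))" by simp
    then obtain k where "\<bar>v $ k\<bar> = Max (range (\<lambda>j. \<bar>v $ j\<bar>))"
      by (metis (mono_tags, lifting) Max_in UNIV_not_empty empty_is_image imageE)
    then show ?thesis using that by (metis Max_ge \<open>finite _\<close> rangeI)
  qed
  define m where "m = \<bar>v $ k\<bar>"
  have "norm v \<le> (\<Sum>j\<in>UNIV. \<bar>v $ j\<bar>)"
    by (rule norm_le_l1_cart)
  also have "\<dots> \<le> real d * m"
    using sum_bounded_above[of UNIV "\<lambda>j. \<bar>v $ j\<bar>" m] k unfolding m_def d_def by auto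
  finally have "norm v / real d \<le> m"
    using \<open>0 < d\<close> by (simp add: pos_divide_le_eq mult.commute)
  then have "norm v / real d / (real d + 1) \<le> m / (real d + 1)"
    by (intro divide_right_mono) auto
  then have bound: "norm v / (real d * (real d + 1)) \<le> m / (real d + 1)"
    by (simp only: divide_divide_eq_left)
  show ?thesis
  proof (cases "\<exists>j. m / (real d + 1) \<le> v $ j")
    case True
    then obtain j where j: "m / (real d + 1) \<le> v $ j" by blast
    obtain i where "i < d" "idx i = j"
      using idx unfolding bij_betw_def d_def by (metis UNIV_I imageE lessThan_iff)
    then show ?thesis
      using j bound by (intro exI[of _ i]) (auto simp: simplex_vertex_def d_def inner_axis)
  next
    case False
    \<comment> \<open>Then the largest coordinate is negative and dominates the sum of all coordinates.\<close>
    then have small: "v $ j < m / (real d + 1)" for j by (meson not_le)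
    have "m / (real d + 1) \<le> m / 1"
      unfolding m_def by (intro divide_left_mono) auto
    then have vk: "v $ k = - m"
      using small[of k] unfolding m_def by (cases "v $ k \<ge> 0") auto
    have "(\<Sum>j\<in>UNIV - {k}. v $ j) \<le> real (card (UNIV - {k})) * (m / (real d + 1))"
      using sum_bounded_above[of "UNIV - {k}" "\<lambda>j. v $ j" "m / (real d + 1)"] small
      by (auto simp: less_imp_le)
    also have "card (UNIV - {k}) = d - 1"
      unfolding d_def by (simp add: card_Diff_singleton)
    also have "real (d - 1) * (m / (real d + 1)) \<le> real d * (m / (real d + 1))"
      unfolding m_def by (intro mult_right_mono) auto
    also have "real d * (m / (real d + 1)) = m - m / (real d + 1)"
      by (simp add: field_simps)
    finally have "m / (real d + 1) \<le> - (\<Sum>j\<in>UNIV. v $ j)"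
      using vk by (simp add: sum.remove[of UNIV k])
    moreover have "v \<bullet> simplex_vertex idx d = - (\<Sum>j\<in>UNIV. v $ j)"
      by (simp add: simplex_vertex_def d_def inner_vec_def sum_negf)
    ultimately have "norm v / (real d * (real d + 1)) \<le> v \<bullet> simplex_vertex idx d"
      using bound by linarith
    then show ?thesis unfolding d_def by blast
  qed
qed

lemma ball_subset_convex_hull_if_margin:
  fixes h :: "'a::euclidean_space"
  assumes "finite S" and margin: "\<And>v. \<exists>u\<in>S. c * norm v \<le> v \<bullet> (u - h)"
  shows "ball h c \<subseteq> convex hull S"
proof
  fix y assume y: "y \<in> ball h c"
  show "y \<in> convex hull S"
  proof (rule ccontr)
    assume "y \<notin> convex hull S"
    moreover have "closed (convex hull S)"
      using \<open>finite S\<close> by (simp add: compact_imp_closed finite_imp_compact_convex_hull)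
    ultimately obtain a b where ab: "a \<bullet> y < b" "\<And>x. x \<in> convex hull S \<Longrightarrow> b < a \<bullet> x"
      using separating_hyperplane_closed_point[OF convex_convex_hull] by blast
    obtain u where u: "u \<in> S" "c * norm (- a) \<le> (- a) \<bullet> (u - h)" using margin by blast
    have "(- a) \<bullet> (u - h) < a \<bullet> (h - y)"
      using ab(1) ab(2)[OF hull_inc[OF u(1)]] by (simp add: inner_diff_right)
    also have "\<dots> \<le> norm a * norm (h - y)" by (rule norm_cauchy_schwarz)
    also have "\<dots> \<le> norm a * c"
      using y by (intro mult_left_mono) (auto simp: dist_norm)
    finally show False using u(2) by (simp add: mult.commute)
  qed
qed

lemma
  fixes u :: "nat \<Rightarrow> 'a::euclidean_space"
  assumes "interior (convex hull (u ` {..DIM('a)})) \<noteq> {}"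
  shows inj_on_if_interior_convex_hull_nonempty: "inj_on u {..DIM('a)}"
    and affine_independent_if_interior_convex_hull_nonempty: "\<not> affine_dependent (u ` {..DIM('a)})"
    and span_edges_if_interior_convex_hull_nonempty:
      "span {u i - u DIM('a) | i. i < DIM('a)} = UNIV"
proof -
  let ?n = "DIM('a)" and ?S = "u ` {..DIM('a)}"
  have aff: "aff_dim ?S = ?n"
    using aff_dim_nonempty_interior[OF assms] by (simp add: aff_dim_convex_hull)
  moreover have "aff_dim ?S \<le> int (card ?S) - 1" using aff_dim_le_card[of ?S] by simp
  moreover have "card ?S \<le> ?n + 1" using card_image_le[of "{..?n}" u] by simp
  ultimately have card: "card ?S = ?n + 1" by linarith
  then have "card ?S = card {..?n}" by simp
  then show "inj_on u {..?n}" by (intro eq_card_imp_inj_on) simp_all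
  show "\<not> affine_dependent ?S"
    using affine_independent_iff_card[of ?S] aff card by simp
  have "u ?n \<in> affine hull ?S" by (intro hull_inc) simp
  from aff_dim_eq_dim[OF this] aff have "dim ((+) (- u ?n) ` ?S) = ?n" by simp
  moreover have "{..?n} = insert ?n {..<?n}" by auto
  then have "(+) (- u ?n) ` ?S = insert 0 {u i - u ?n | i. i < ?n}"
    by auto
  ultimately have "dim (insert 0 {u i - u ?n | i. i < ?n}) = DIM('a)" by simp
  then have "span (insert 0 {u i - u ?n | i. i < ?n}) = UNIV" using dim_eq_full by blast
  then show "span {u i - u ?n | i. i < ?n} = UNIV" by simp
qed

lemma positive_barycentric_coords_if_in_interior_convex_hull:
  fixes u :: "nat \<Rightarrow> 'a::euclidean_space"
  assumes h: "h \<in> interior (convex hull (u ` {..DIM('a)}))"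
  shows "\<exists>lam. (\<forall>i\<le>DIM('a). 0 < lam i) \<and> (\<Sum>i\<le>DIM('a). lam i) = 1 \<and>
    (\<Sum>i\<le>DIM('a). lam i *\<^sub>R u i) = h"
proof -
  have ne: "interior (convex hull (u ` {..DIM('a)})) \<noteq> {}" using h by blast
  note inj = inj_on_if_interior_convex_hull_nonempty[OF ne]
  have "\<not> card (u ` {..DIM('a)}) \<le> DIM('a)" using inj by (simp add: card_image)
  then obtain w where "\<forall>x\<in>u ` {..DIM('a)}. 0 < w x" "sum w (u ` {..DIM('a)}) = 1"
      "(\<Sum>x\<in>u ` {..DIM('a)}. w x *\<^sub>R x) = h"
    using h interior_convex_hull_explicit[OF affine_independent_if_interior_convex_hull_nonempty[OF ne]]
    by auto
  then show ?thesis
    using inj by (intro exI[of _ "w \<circ> u"]) (simp add: sum.reindex)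
qed

lemma barycentric_coords_near_simplex:
  fixes u :: "nat \<Rightarrow> real ^ 'd"
  assumes idx: "bij_betw idx {..<CARD('d)} UNIV" and "0 < s"
    and near: "\<And>i. i \<le> CARD('d) \<Longrightarrow>
      norm (u i - (h + s *\<^sub>R simplex_vertex idx i)) \<le> s / (2 * real CARD('d) * (real CARD('d) + 1))"
  shows "\<exists>lam. (\<forall>i\<le>CARD('d). 0 < lam i) \<and> (\<Sum>i\<le>CARD('d). lam i) = 1 \<and>
    (\<Sum>i\<le>CARD('d). lam i *\<^sub>R u i) = h \<and> span {u i - u CARD('d) | i. i < CARD('d)} = UNIV"
proof -
  define d where "d = CARD('d)"
  define D where "D = real d * (real d + 1)"
  define c where "c = s / (2 * D)"
  have "0 < D" unfolding D_def d_def by (intro mult_pos_pos) auto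
  then have "0 < c" unfolding c_def using \<open>0 < s\<close> by simp
  have tolerance: "s / (2 * real CARD('d) * (real CARD('d) + 1)) = c"
    by (simp add: c_def D_def d_def mult.assoc)
  \<comment> \<open>The exact vertices see each direction with margin \<open>2 c\<close>; moving them by at most \<open>c\<close> halves it.\<close>
  have margin: "\<exists>x\<in>u ` {..d}. c * norm v \<le> v \<bullet> (x - h)" for v
  proof -
    define e where "e i = u i - (h + s *\<^sub>R simplex_vertex idx i)" for i
    obtain i where i: "i \<le> d" "norm v / D \<le> v \<bullet> simplex_vertex idx i"
      using simplex_vertex_margin[OF idx, of v] unfolding D_def d_def by blast
    have "v \<bullet> (u i - h) = s * (v \<bullet> simplex_vertex idx i) + v \<bullet> e i"
      by (simp add: e_def inner_diff_right inner_add_right)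
    moreover have "s * (norm v / D) \<le> s * (v \<bullet> simplex_vertex idx i)"
      using i(2) \<open>0 < s\<close> by (intro mult_left_mono) auto
    moreover have "s * (norm v / D) = 2 * (c * norm v)"
      using \<open>0 < D\<close> unfolding c_def by (simp add: field_simps)
    moreover have "- (v \<bullet> e i) \<le> c * norm v"
    proof -
      have "norm (e i) \<le> c" using near[of i] i(1) unfolding tolerance e_def d_def by simp
      have "- (v \<bullet> e i) \<le> norm v * norm (e i)"
        using Cauchy_Schwarz_ineq2[of v "e i"] by linarith
      also have "\<dots> \<le> norm v * c" using \<open>norm (e i) \<le> c\<close> by (intro mult_left_mono) auto
      finally show ?thesis by (simp add: mult.commute)
    qed
    ultimately have "c * norm v \<le> v \<bullet> (u i - h)" by linarith
    then show ?thesis using i(1) by blast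
  qed
  have "ball h c \<subseteq> convex hull (u ` {..d})"
    by (rule ball_subset_convex_hull_if_margin[OF _ margin]) simp
  then have "h \<in> interior (convex hull (u ` {..d}))"
    using \<open>0 < c\<close> by (meson centre_in_ball interior_maximal open_ball subsetD)
  then have h_int: "h \<in> interior (convex hull (u ` {..DIM(real ^ 'd)}))"
    unfolding d_def by simp
  then have "interior (convex hull (u ` {..DIM(real ^ 'd)})) \<noteq> {}" by blast
  with positive_barycentric_coords_if_in_interior_convex_hull[OF h_int]
    span_edges_if_interior_convex_hull_nonempty[of u]
  show ?thesis by auto
qed

section \<open>Finite mixtures of measures\<close>

definition mixture_measure :: "'i set \<Rightarrow> ('i \<Rightarrow> real) \<Rightarrow> ('i \<Rightarrow> 'a::topological_space measure) \<Rightarrow> 'a measure" where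
  "mixture_measure I c \<nu> =
     measure_of UNIV (sets borel) (\<lambda>A. \<Sum>i\<in>I. ennreal (c i) * emeasure (\<nu> i) A)"

lemma sets_mixture_measure [simp, measurable_cong]: "sets (mixture_measure I c \<nu>) = sets borel"
  unfolding mixture_measure_def by (metis sets.sets_measure_of_eq space_borel)

lemma space_mixture_measure [simp]: "space (mixture_measure I c \<nu>) = UNIV"
  using sets_eq_imp_space_eq[OF sets_mixture_measure] by simp

lemma emeasure_mixture_measure:
  fixes \<nu> :: "'i \<Rightarrow> 'a::topological_space measure"
  assumes "finite I" and sets: "\<And>i. i \<in> I \<Longrightarrow> sets (\<nu> i) = sets borel" and "A \<in> sets borel"
  shows "emeasure (mixture_measure I c \<nu>) A = (\<Sum>i\<in>I. ennreal (c i) * emeasure (\<nu> i) A)"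
  unfolding mixture_measure_def
proof (rule emeasure_measure_of_sigma)
  show "sigma_algebra UNIV (sets borel)"
    by (metis sets.sigma_algebra_axioms space_borel)
  show "positive (sets borel) (\<lambda>A. \<Sum>i\<in>I. ennreal (c i) * emeasure (\<nu> i) A)"
    unfolding positive_def by simp
  show "countably_additive (sets borel) (\<lambda>A. \<Sum>i\<in>I. ennreal (c i) * emeasure (\<nu> i) A)"
  proof (rule countably_additiveI)
    fix F :: "nat \<Rightarrow> 'a set" assume F: "range F \<subseteq> sets borel" "disjoint_family F"
    have "(\<Sum>n. \<Sum>i\<in>I. ennreal (c i) * emeasure (\<nu> i) (F n)) =
        (\<Sum>i\<in>I. ennreal (c i) * (\<Sum>n. emeasure (\<nu> i) (F n)))"
      by (simp add: suminf_sum ennreal_suminf_cmult)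
    also have "\<dots> = (\<Sum>i\<in>I. ennreal (c i) * emeasure (\<nu> i) (\<Union> (range F)))"
      using F sets by (intro sum.cong refl arg_cong2[where f = "(*)"] suminf_emeasure) auto
    finally show "(\<Sum>n. \<Sum>i\<in>I. ennreal (c i) * emeasure (\<nu> i) (F n)) =
        (\<Sum>i\<in>I. ennreal (c i) * emeasure (\<nu> i) (\<Union> (range F)))" .
  qed
qed fact

lemma nn_integral_mixture_measure:
  fixes \<nu> :: "'i \<Rightarrow> 'a::topological_space measure"
  assumes fin: "finite I" and sets: "\<And>i. i \<in> I \<Longrightarrow> sets (\<nu> i) = sets borel"
    and f: "f \<in> borel_measurable borel"
  shows "(\<integral>\<^sup>+x. f x \<partial>mixture_measure I c \<nu>) = (\<Sum>i\<in>I. ennreal (c i) * (\<integral>\<^sup>+x. f x \<partial>\<nu> i))"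
proof -
  have f': "f \<in> borel_measurable (mixture_measure I c \<nu>)"
    using f measurable_cong_sets[OF sets_mixture_measure refl] by blast
  have meas: "g \<in> borel_measurable (mixture_measure I c \<nu>) \<Longrightarrow> i \<in> I \<Longrightarrow> g \<in> borel_measurable (\<nu> i)" for g :: "'a \<Rightarrow> ennreal" and i
    using measurable_cong_sets[OF sets[of i] refl, where ?N = "borel :: ennreal measure"] measurable_cong_sets[OF sets_mixture_measure refl, of I c \<nu> "borel :: ennreal measure"] by blast
  from f' show ?thesis
  proof (induct rule: borel_measurable_induct)
    case (cong f g)
    then have "f = g" by (auto simp: fun_eq_iff)
    then show ?case using cong by simp
  next
    case (set A)
    then have A: "A \<in> sets borel" by simp
    have "(\<integral>\<^sup>+x. indicator A x \<partial>mixture_measure I c \<nu>) = emeasure (mixture_measure I c \<nu>) A" using set by simp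
    also have "\<dots> = (\<Sum>i\<in>I. ennreal (c i) * emeasure (\<nu> i) A)" by (rule emeasure_mixture_measure[OF fin sets A])
    also have "\<dots> = (\<Sum>i\<in>I. ennreal (c i) * (\<integral>\<^sup>+x. indicator A x \<partial>\<nu> i))"
      using sets A by (intro sum.cong refl) simp
    finally show ?case .
  next
    case (mult u r)
    have "(\<integral>\<^sup>+x. r * u x \<partial>mixture_measure I c \<nu>) = r * (\<integral>\<^sup>+x. u x \<partial>mixture_measure I c \<nu>)"
      by (rule nn_integral_cmult) (rule mult(2))
    also have "\<dots> = r * (\<Sum>i\<in>I. ennreal (c i) * (\<integral>\<^sup>+x. u x \<partial>\<nu> i))"
      using mult(4) by simp
    also have "\<dots> = (\<Sum>i\<in>I. ennreal (c i) * (r * (\<integral>\<^sup>+x. u x \<partial>\<nu> i)))"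
      by (simp only: sum_distrib_left mult.left_commute)
    also have "\<dots> = (\<Sum>i\<in>I. ennreal (c i) * (\<integral>\<^sup>+x. r * u x \<partial>\<nu> i))"
    proof (rule sum.cong[OF refl])
      fix i assume i: "i \<in> I"
      show "ennreal (c i) * (r * (\<integral>\<^sup>+x. u x \<partial>\<nu> i)) = ennreal (c i) * (\<integral>\<^sup>+x. r * u x \<partial>\<nu> i)"
        using nn_integral_cmult[OF meas[OF mult(2) i], of r] by simp
    qed
    finally show ?case .
  next
    case (add u v)
    have "(\<integral>\<^sup>+x. v x + u x \<partial>mixture_measure I c \<nu>) = (\<integral>\<^sup>+x. v x \<partial>mixture_measure I c \<nu>) + (\<integral>\<^sup>+x. u x \<partial>mixture_measure I c \<nu>)"
      by (rule nn_integral_add) (fact add)+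
    also have "\<dots> = (\<Sum>i\<in>I. ennreal (c i) * (\<integral>\<^sup>+x. v x \<partial>\<nu> i)) + (\<Sum>i\<in>I. ennreal (c i) * (\<integral>\<^sup>+x. u x \<partial>\<nu> i))"
      using add(3) add(7) by simp
    also have "\<dots> = (\<Sum>i\<in>I. ennreal (c i) * ((\<integral>\<^sup>+x. v x \<partial>\<nu> i) + (\<integral>\<^sup>+x. u x \<partial>\<nu> i)))"
      by (simp only: sum.distrib[symmetric] distrib_left)
    also have "\<dots> = (\<Sum>i\<in>I. ennreal (c i) * (\<integral>\<^sup>+x. v x + u x \<partial>\<nu> i))"
    proof (rule sum.cong[OF refl])
      fix i assume i: "i \<in> I"
      show "ennreal (c i) * ((\<integral>\<^sup>+x. v x \<partial>\<nu> i) + (\<integral>\<^sup>+x. u x \<partial>\<nu> i)) = ennreal (c i) * (\<integral>\<^sup>+x. v x + u x \<partial>\<nu> i)"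
        using nn_integral_add[OF meas[OF add(4) i] meas[OF add(1) i]] by simp
    qed
    finally show ?case .
  next
    case (seq U)
    have "(\<integral>\<^sup>+x. (SUP n. U n) x \<partial>mixture_measure I c \<nu>) = (SUP n. \<integral>\<^sup>+x. U n x \<partial>mixture_measure I c \<nu>)"
      using nn_integral_monotone_convergence_SUP[OF seq(4) seq(1)] by (simp add: image_comp)
    also have "\<dots> = (SUP n. \<Sum>i\<in>I. ennreal (c i) * (\<integral>\<^sup>+x. U n x \<partial>\<nu> i))"
      using seq(3) by simp
    also have "\<dots> = (\<Sum>i\<in>I. SUP n. ennreal (c i) * (\<integral>\<^sup>+x. U n x \<partial>\<nu> i))"
    proof (rule ennreal_SUP_sum)
      fix i assume "i \<in> I"
      show "incseq (\<lambda>n. ennreal (c i) * (\<integral>\<^sup>+x. U n x \<partial>\<nu> i))"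
        using seq(4) by (auto simp: incseq_def le_fun_def intro!: mult_left_mono nn_integral_mono)
    qed
    also have "\<dots> = (\<Sum>i\<in>I. ennreal (c i) * (\<integral>\<^sup>+x. (SUP n. U n) x \<partial>\<nu> i))"
    proof (rule sum.cong[OF refl])
      fix i assume i: "i \<in> I"
      have "(\<integral>\<^sup>+x. (SUP n. U n) x \<partial>\<nu> i) = (SUP n. \<integral>\<^sup>+x. U n x \<partial>\<nu> i)"
        using nn_integral_monotone_convergence_SUP[OF seq(4) meas[OF seq(1) i]] by (simp add: image_comp)
      then show "(SUP n. ennreal (c i) * (\<integral>\<^sup>+x. U n x \<partial>\<nu> i)) = ennreal (c i) * (\<integral>\<^sup>+x. (SUP n. U n) x \<partial>\<nu> i)"
        by (simp add: SUP_mult_left_ennreal)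
    qed
    finally show ?case .
  qed
qed

lemma prob_space_mixture_measure:
  fixes \<nu> :: "'i \<Rightarrow> 'a::topological_space measure"
  assumes "finite I" and "\<And>i. i \<in> I \<Longrightarrow> sets (\<nu> i) = sets borel"
    and "\<And>i. i \<in> I \<Longrightarrow> prob_space (\<nu> i)"
    and "\<And>i. i \<in> I \<Longrightarrow> 0 \<le> c i" and "(\<Sum>i\<in>I. c i) = 1"
  shows "prob_space (mixture_measure I c \<nu>)"
proof
  have "emeasure (\<nu> i) UNIV = 1" if "i \<in> I" for i
    using prob_space.emeasure_space_1[OF assms(3)[OF that]] sets_eq_imp_space_eq[OF assms(2)[OF that]]
    by simp
  then have "emeasure (mixture_measure I c \<nu>) UNIV = (\<Sum>i\<in>I. ennreal (c i))"
    by (simp add: emeasure_mixture_measure[OF assms(1,2)])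
  also have "\<dots> = 1" using assms by simp
  finally show "emeasure (mixture_measure I c \<nu>) (space (mixture_measure I c \<nu>)) = 1" by simp
qed

lemma mixture_measure_in_invariant_measures:
  fixes \<nu> :: "'i \<Rightarrow> 'a::metric_space measure"
  assumes "finite I" and \<nu>: "\<And>i. i \<in> I \<Longrightarrow> \<nu> i \<in> invariant_measures T"
    and "\<And>i. i \<in> I \<Longrightarrow> 0 \<le> c i" and "(\<Sum>i\<in>I. c i) = 1"
    and T: "T \<in> borel_measurable borel"
  shows "mixture_measure I c \<nu> \<in> invariant_measures T"
proof -
  have sets: "\<And>i. i \<in> I \<Longrightarrow> sets (\<nu> i) = sets borel"
    and "\<And>i. i \<in> I \<Longrightarrow> prob_space (\<nu> i)"
    and inv: "\<And>i A. i \<in> I \<Longrightarrow> A \<in> sets borel \<Longrightarrow> emeasure (\<nu> i) (T -` A) = emeasure (\<nu> i) A"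
    using \<nu> unfolding invariant_measures_def by auto
  then have "prob_space (mixture_measure I c \<nu>)"
    using assms by (intro prob_space_mixture_measure)
  moreover have "T -` A \<in> sets borel" if "A \<in> sets borel" for A
    using measurable_sets[OF T that] by simp
  ultimately show ?thesis
    using inv unfolding invariant_measures_def
    by (simp add: emeasure_mixture_measure[OF \<open>finite I\<close> sets] cong: sum.cong)
qed

lemma integral_mixture_measure:
  fixes \<nu> :: "'i \<Rightarrow> 'a::topological_space measure" and f :: "'a \<Rightarrow> real"
  assumes "finite I" and sets: "\<And>i. i \<in> I \<Longrightarrow> sets (\<nu> i) = sets borel"
    and prob: "\<And>i. i \<in> I \<Longrightarrow> prob_space (\<nu> i)"
    and c: "\<And>i. i \<in> I \<Longrightarrow> 0 \<le> c i" and c1: "(\<Sum>i\<in>I. c i) = 1"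
    and f: "f \<in> borel_measurable borel" and B: "\<And>x. \<bar>f x\<bar> \<le> B"
  shows "integral\<^sup>L (mixture_measure I c \<nu>) f = (\<Sum>i\<in>I. c i * integral\<^sup>L (\<nu> i) f)"
proof -
  \<comment> \<open>Shifting by the bound \<open>B\<close> reduces the claim to nonnegative integrands.\<close>
  have shift: "ennreal (integral\<^sup>L P f + B) = (\<integral>\<^sup>+x. ennreal (f x + B) \<partial>P)"
    and shift_nonneg: "0 \<le> integral\<^sup>L P f + B"
    if "sets P = sets borel" "prob_space P" for P
  proof -
    interpret prob_space P by fact
    have int: "integrable P f"
      using f B that(1) by (intro integrable_const_bound[where B = B]) (auto cong: measurable_cong_sets)
    have nonneg: "0 \<le> f x + B" for x using B[of x] by linarith
    show "ennreal (integral\<^sup>L P f + B) = (\<integral>\<^sup>+x. ennreal (f x + B) \<partial>P)"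
      using int nonneg by (simp add: nn_integral_eq_integral prob_space)
    show "0 \<le> integral\<^sup>L P f + B"
      using int nonneg Bochner_Integration.integral_nonneg[of P "\<lambda>x. f x + B"] by (simp add: prob_space)
  qed
  have mix: "sets (mixture_measure I c \<nu>) = sets borel" "prob_space (mixture_measure I c \<nu>)"
    using assms by (auto intro: prob_space_mixture_measure)
  have "ennreal (integral\<^sup>L (mixture_measure I c \<nu>) f + B) =
      (\<Sum>i\<in>I. ennreal (c i) * (\<integral>\<^sup>+x. ennreal (f x + B) \<partial>\<nu> i))"
    using f by (simp add: shift[OF mix] nn_integral_mixture_measure[OF \<open>finite I\<close> sets])
  also have "\<dots> = ennreal (\<Sum>i\<in>I. c i * (integral\<^sup>L (\<nu> i) f + B))"
    using c shift_nonneg[OF sets prob]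
    by (simp add: shift[OF sets prob] ennreal_mult sum_ennreal[symmetric] cong: sum.cong)
  finally have "integral\<^sup>L (mixture_measure I c \<nu>) f + B = (\<Sum>i\<in>I. c i * (integral\<^sup>L (\<nu> i) f + B))"
    using c shift_nonneg[OF sets prob] shift_nonneg[OF mix] by (simp add: sum_nonneg)
  then show ?thesis
    using c1 by (simp add: distrib_left sum.distrib flip: sum_distrib_right)
qed

lemma invariant_measuresD:
  assumes "M \<in> invariant_measures T"
  shows "sets M = sets borel" and "prob_space M"
  using assms by (simp_all add: invariant_measures_def)

lemma integral_mixture_measure_continuous:
  fixes \<nu> :: "'i \<Rightarrow> 'a::metric_space measure" and f :: "'a \<Rightarrow> real"
  assumes "compact (UNIV :: 'a set)" and "continuous_on UNIV f" and "finite I"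
    and "\<And>i. i \<in> I \<Longrightarrow> sets (\<nu> i) = sets borel" and "\<And>i. i \<in> I \<Longrightarrow> prob_space (\<nu> i)"
    and "\<And>i. i \<in> I \<Longrightarrow> 0 \<le> c i" and "(\<Sum>i\<in>I. c i) = 1"
  shows "integral\<^sup>L (mixture_measure I c \<nu>) f = (\<Sum>i\<in>I. c i * integral\<^sup>L (\<nu> i) f)"
proof -
  obtain B where B: "\<And>x. \<bar>f x\<bar> \<le> B"
    using compact_imp_bounded[OF compact_continuous_image[OF assms(2,1)]]
    unfolding bounded_iff by auto
  show ?thesis
    using B assms(3-7) borel_measurable_continuous_onI[OF assms(2)]
    by (intro integral_mixture_measure[where B = B]) auto
qed

lemma integral_mixture_measure_dist_less:
  fixes \<nu> :: "'i \<Rightarrow> 'a::metric_space measure" and f :: "'a \<Rightarrow> real"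
  assumes "compact (UNIV :: 'a set)" and "continuous_on UNIV f" and "finite I"
    and "\<And>i. i \<in> I \<Longrightarrow> sets (\<nu> i) = sets borel" and "\<And>i. i \<in> I \<Longrightarrow> prob_space (\<nu> i)"
    and "\<And>i. i \<in> I \<Longrightarrow> 0 \<le> c i" and "(\<Sum>i\<in>I. c i) = 1"
    and "\<And>i. i \<in> I \<Longrightarrow> \<bar>integral\<^sup>L (\<nu> i) f - a\<bar> < \<delta>"
  shows "\<bar>integral\<^sup>L (mixture_measure I c \<nu>) f - a\<bar> < \<delta>"
proof -
  have "(\<Sum>i\<in>I. c i *\<^sub>R integral\<^sup>L (\<nu> i) f) \<in> ball a \<delta>"
    by (rule convex_sum) (use assms in \<open>auto simp: dist_real_def abs_minus_commute\<close>)
  then show ?thesis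
    using integral_mixture_measure_continuous[OF assms(1-7)]
    by (simp add: dist_real_def abs_minus_commute)
qed

lemma rot_vec_mixture_measure:
  fixes \<nu> :: "'i \<Rightarrow> 'a::metric_space measure" and \<phi> :: "'a \<Rightarrow> real ^ 'd"
  assumes "compact (UNIV :: 'a set)" and "continuous_on UNIV \<phi>" and "finite I"
    and "\<And>i. i \<in> I \<Longrightarrow> sets (\<nu> i) = sets borel" and "\<And>i. i \<in> I \<Longrightarrow> prob_space (\<nu> i)"
    and "\<And>i. i \<in> I \<Longrightarrow> 0 \<le> c i" and "(\<Sum>i\<in>I. c i) = 1"
  shows "rot_vec \<phi> (mixture_measure I c \<nu>) = (\<Sum>i\<in>I. c i *\<^sub>R rot_vec \<phi> (\<nu> i))"
proof -
  have "rot_vec \<phi> (mixture_measure I c \<nu>) $ j = (\<Sum>i\<in>I. c i *\<^sub>R rot_vec \<phi> (\<nu> i)) $ j" for j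
    using integral_mixture_measure_continuous[OF assms(1) continuous_on_component[OF assms(2)] assms(3-7)]
    by (simp add: rot_vec_def)
  then show ?thesis by (simp add: vec_eq_iff)
qed

definition convex_mixture :: "real \<Rightarrow> 'a::topological_space measure \<Rightarrow> 'a measure \<Rightarrow> 'a measure" where
  "convex_mixture t \<mu> \<nu> = mixture_measure UNIV (\<lambda>b. if b then t else 1 - t) (\<lambda>b. if b then \<nu> else \<mu>)"

lemma convex_mixture_in_invariant_measures:
  "\<mu> \<in> invariant_measures T \<Longrightarrow> \<nu> \<in> invariant_measures T \<Longrightarrow> 0 \<le> t \<Longrightarrow> t \<le> 1 \<Longrightarrow>
    T \<in> borel_measurable borel \<Longrightarrow> convex_mixture t \<mu> \<nu> \<in> invariant_measures T"
  unfolding convex_mixture_def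
  by (rule mixture_measure_in_invariant_measures) (auto simp: UNIV_bool)

lemma integral_convex_mixture:
  fixes \<mu> \<nu> :: "'a::metric_space measure" and f :: "'a \<Rightarrow> real"
  assumes "compact (UNIV :: 'a set)" and "continuous_on UNIV f"
    and "sets \<mu> = sets borel" "prob_space \<mu>" "sets \<nu> = sets borel" "prob_space \<nu>"
    and "0 \<le> t" "t \<le> 1"
  shows "integral\<^sup>L (convex_mixture t \<mu> \<nu>) f = (1 - t) * integral\<^sup>L \<mu> f + t * integral\<^sup>L \<nu> f"
proof -
  have "integral\<^sup>L (convex_mixture t \<mu> \<nu>) f =
      (\<Sum>b\<in>UNIV. (if b then t else 1 - t) * integral\<^sup>L (if b then \<nu> else \<mu>) f)"
    unfolding convex_mixture_def
    by (rule integral_mixture_measure_continuous[OF assms(1,2)]) (use assms in \<open>auto simp: UNIV_bool\<close>)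
  then show ?thesis by (simp add: UNIV_bool)
qed

lemma rot_vec_convex_mixture:
  fixes \<mu> \<nu> :: "'a::metric_space measure" and \<phi> :: "'a \<Rightarrow> real ^ 'd"
  assumes "compact (UNIV :: 'a set)" and "continuous_on UNIV \<phi>"
    and "sets \<mu> = sets borel" "prob_space \<mu>" "sets \<nu> = sets borel" "prob_space \<nu>"
    and "0 \<le> t" "t \<le> 1"
  shows "rot_vec \<phi> (convex_mixture t \<mu> \<nu>) = (1 - t) *\<^sub>R rot_vec \<phi> \<mu> + t *\<^sub>R rot_vec \<phi> \<nu>"
proof -
  have "rot_vec \<phi> (convex_mixture t \<mu> \<nu>) =
      (\<Sum>b\<in>UNIV. (if b then t else 1 - t) *\<^sub>R rot_vec \<phi> (if b then \<nu> else \<mu>))"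
    unfolding convex_mixture_def
    by (rule rot_vec_mixture_measure[OF assms(1,2)]) (use assms in \<open>auto simp: UNIV_bool\<close>)
  then show ?thesis by (simp add: UNIV_bool)
qed

section \<open>Basic neighbourhoods in the weak* topology\<close>

lemma weak_star_basic_open:
  fixes f :: "'a::metric_space \<Rightarrow> real"
  assumes "continuous_on UNIV f" and "open U"
  shows "openin weak_star_topology {M :: 'a measure. integral\<^sup>L M f \<in> U}"
proof -
  have "{M. integral\<^sup>L M f \<in> U} \<in>
      {{M. integral\<^sup>L M f \<in> U} | f U. continuous_on UNIV f \<and> open (U :: real set)}"
    using assms by blast
  then show ?thesis
    unfolding weak_star_topology_def by (rule topology_generated_by_Basis)
qed

lemma topspace_weak_star_topology [simp]: "topspace weak_star_topology = UNIV"
proof -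
  have "openin weak_star_topology (UNIV :: 'a::metric_space measure set)"
    using weak_star_basic_open[of "\<lambda>_. 0" UNIV] by simp
  then show ?thesis using openin_subset by blast
qed

lemma openin_weak_star_finite_ball:
  fixes F :: "('a::metric_space \<Rightarrow> real) set"
  assumes "finite F" and "\<forall>f\<in>F. continuous_on UNIV f"
  shows "openin weak_star_topology {N :: 'a measure. \<forall>f\<in>F. \<bar>integral\<^sup>L N f - c f\<bar> < \<delta>}"
  using assms
proof (induction F rule: finite_induct)
  case empty
  show ?case using openin_topspace[of weak_star_topology] by simp
next
  case (insert f F)
  have "openin weak_star_topology {N :: 'a measure. integral\<^sup>L N f \<in> ball (c f) \<delta>}"
    using insert.prems by (intro weak_star_basic_open) auto
  from openin_Int[OF this insert.IH] insert.prems
  have "openin weak_star_topology ({N. integral\<^sup>L N f \<in> ball (c f) \<delta>} \<inter>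
      {N. \<forall>g\<in>F. \<bar>integral\<^sup>L N g - c g\<bar> < \<delta>})" by simp
  moreover have "{N. integral\<^sup>L N f \<in> ball (c f) \<delta>} \<inter> {N. \<forall>g\<in>F. \<bar>integral\<^sup>L N g - c g\<bar> < \<delta>} =
      {N. \<forall>g\<in>insert f F. \<bar>integral\<^sup>L N g - c g\<bar> < \<delta>}"
    by (auto simp: dist_real_def abs_minus_commute)
  ultimately show ?case by simp
qed

lemma openin_weak_star_contains_finite_ball:
  fixes M :: "'a::metric_space measure"
  assumes "openin weak_star_topology U" and "M \<in> U"
  shows "\<exists>(F :: ('a \<Rightarrow> real) set) \<delta>. finite F \<and> (\<forall>f\<in>F. continuous_on UNIV f) \<and>
    0 < \<delta> \<and> {N. \<forall>f\<in>F. \<bar>integral\<^sup>L N f - integral\<^sup>L M f\<bar> < \<delta>} \<subseteq> U"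
proof -
  have "generate_topology_on
      {{M. integral\<^sup>L M f \<in> U} | f U. continuous_on UNIV f \<and> open (U :: real set)} U"
    using assms(1) unfolding weak_star_topology_def openin_topology_generated_by_iff .
  then show ?thesis using assms(2)
  proof (induction arbitrary: M)
    case (Int a b)
    obtain F1 :: "('a \<Rightarrow> real) set" and \<delta>1 where
      F1: "finite F1" "\<forall>f\<in>F1. continuous_on UNIV f" "0 < \<delta>1"
      "{N. \<forall>f\<in>F1. \<bar>integral\<^sup>L N f - integral\<^sup>L M f\<bar> < \<delta>1} \<subseteq> a"
      using Int.IH(1)[of M] Int.prems by blast
    obtain F2 :: "('a \<Rightarrow> real) set" and \<delta>2 where
      F2: "finite F2" "\<forall>f\<in>F2. continuous_on UNIV f" "0 < \<delta>2"
      "{N. \<forall>f\<in>F2. \<bar>integral\<^sup>L N f - integral\<^sup>L M f\<bar> < \<delta>2} \<subseteq> b"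
      using Int.IH(2)[of M] Int.prems by blast
    have "{N. \<forall>f\<in>F1 \<union> F2. \<bar>integral\<^sup>L N f - integral\<^sup>L M f\<bar> < min \<delta>1 \<delta>2} \<subseteq>
        {N. \<forall>f\<in>F1. \<bar>integral\<^sup>L N f - integral\<^sup>L M f\<bar> < \<delta>1} \<inter>
        {N. \<forall>f\<in>F2. \<bar>integral\<^sup>L N f - integral\<^sup>L M f\<bar> < \<delta>2}"
      by auto
    also have "\<dots> \<subseteq> a \<inter> b" using F1(4) F2(4) by blast
    finally have "{N. \<forall>f\<in>F1 \<union> F2. \<bar>integral\<^sup>L N f - integral\<^sup>L M f\<bar> < min \<delta>1 \<delta>2} \<subseteq> a \<inter> b" .
    moreover have "finite (F1 \<union> F2)" "\<forall>f\<in>F1 \<union> F2. continuous_on UNIV f" "0 < min \<delta>1 \<delta>2"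
      using F1 F2 by auto
    ultimately show ?case by blast
  next
    case (UN K)
    then obtain k where "k \<in> K" "M \<in> k" by blast
    with UN.IH[of k M] show ?case by blast
  next
    case (Basis s)
    then obtain f :: "'a \<Rightarrow> real" and V where s: "s = {M. integral\<^sup>L M f \<in> V}" "continuous_on UNIV f" "open V"
      by blast
    then obtain e where "0 < e" "ball (integral\<^sup>L M f) e \<subseteq> V"
      using Basis.prems open_contains_ball by blast
    then show ?case
      using s by (intro exI[of _ "{f}"] exI[of _ e]) (auto simp: dist_real_def abs_minus_commute)
  qed simp
qed

lemma in_weak_star_closure_ofD:
  fixes M :: "'a::metric_space measure" and F :: "('a \<Rightarrow> real) set"
  assumes M: "M \<in> weak_star_topology closure_of S"
    and F: "finite F" "\<forall>f\<in>F. continuous_on UNIV f" and "0 < \<delta>"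
  shows "\<exists>N\<in>S. \<forall>f\<in>F. \<bar>integral\<^sup>L N f - integral\<^sup>L M f\<bar> < \<delta>"
proof -
  let ?U = "{N. \<forall>f\<in>F. \<bar>integral\<^sup>L N f - integral\<^sup>L M f\<bar> < \<delta>}"
  have "openin weak_star_topology ?U"
    using F by (rule openin_weak_star_finite_ball)
  moreover have "M \<in> ?U"
    using \<open>0 < \<delta>\<close> by simp
  moreover have "\<forall>U. M \<in> U \<and> openin weak_star_topology U \<longrightarrow> (\<exists>N. N \<in> S \<and> N \<in> U)"
    using M by (simp add: in_closure_of)
  ultimately have "\<exists>N. N \<in> S \<and> N \<in> ?U"
    by (elim allE[of _ ?U] impE) (rule conjI)
  then show ?thesis
    unfolding Bex_def mem_Collect_eq .
qed

lemma in_weak_star_closure_ofI: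
  fixes M :: "'a::metric_space measure"
  assumes close: "\<And>(F :: ('a \<Rightarrow> real) set) \<delta>. finite F \<Longrightarrow> \<forall>f\<in>F. continuous_on UNIV f \<Longrightarrow> 0 < \<delta> \<Longrightarrow>
      \<exists>N\<in>S. \<forall>f\<in>F. \<bar>integral\<^sup>L N f - integral\<^sup>L M f\<bar> < \<delta>"
  shows "M \<in> weak_star_topology closure_of S"
proof -
  have "\<exists>N. N \<in> S \<and> N \<in> U" if U: "M \<in> U" "openin weak_star_topology U" for U
  proof -
    obtain F :: "('a \<Rightarrow> real) set" and \<delta> where F: "finite F" "\<forall>f\<in>F. continuous_on UNIV f" "0 < \<delta>"
      and ball: "{N. \<forall>f\<in>F. \<bar>integral\<^sup>L N f - integral\<^sup>L M f\<bar> < \<delta>} \<subseteq> U"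
      using openin_weak_star_contains_finite_ball[OF U(2,1)] by blast
    obtain N where N: "N \<in> S" "\<forall>f\<in>F. \<bar>integral\<^sup>L N f - integral\<^sup>L M f\<bar> < \<delta>"
      using close[OF F] by blast
    have "N \<in> U" using subsetD[OF ball] N(2) by simp
    with N(1) show ?thesis by blast
  qed
  then show ?thesis by (simp add: in_closure_of)
qed

section \<open>Approximation by mixtures of periodic measures\<close>

lemma norm_rot_vec_diff_le:
  fixes \<phi> :: "'a::metric_space \<Rightarrow> real ^ 'd" and \<eta> :: real
  assumes "\<And>j. \<bar>integral\<^sup>L M (\<lambda>x. \<phi> x $ j) - integral\<^sup>L N (\<lambda>x. \<phi> x $ j)\<bar> \<le> \<eta>"
  shows "norm (rot_vec \<phi> M - rot_vec \<phi> N) \<le> CARD('d) * \<eta>"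
proof -
  have "norm (rot_vec \<phi> M - rot_vec \<phi> N) \<le> (\<Sum>j\<in>UNIV. \<bar>(rot_vec \<phi> M - rot_vec \<phi> N) $ j\<bar>)"
    by (rule norm_le_l1_cart)
  also have "\<dots> \<le> CARD('d) * \<eta>"
    using assms by (intro sum_bounded_above) (simp add: rot_vec_def)
  finally show ?thesis .
qed

lemma mixture_of_periodic_measures_in_N_set:
  fixes T :: "'a::metric_space \<Rightarrow> 'a" and \<phi> :: "'a \<Rightarrow> real ^ 'd"
  assumes "compact (UNIV :: 'a set)" and T: "T \<in> borel_measurable borel" and "continuous_on UNIV \<phi>"
    and \<nu>: "\<And>i. i \<le> CARD('d) \<Longrightarrow> \<nu> i \<in> periodic_measures T"
    and lam: "\<forall>i\<le>CARD('d). 0 < lam i" "(\<Sum>i\<le>CARD('d). lam i) = 1"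
      "(\<Sum>i\<le>CARD('d). lam i *\<^sub>R rot_vec \<phi> (\<nu> i)) = h"
      "span {rot_vec \<phi> (\<nu> i) - rot_vec \<phi> (\<nu> CARD('d)) | i. i < CARD('d)} = UNIV"
  shows "mixture_measure {..CARD('d)} lam \<nu> \<in> rot_preimage T \<phi> h \<inter> N_set T \<phi>"
proof -
  have inv: "\<And>i. i \<in> {..CARD('d)} \<Longrightarrow> \<nu> i \<in> invariant_measures T"
    using \<nu> by (simp add: periodic_measures_def)
  note sets = invariant_measuresD(1)[OF inv] and prob = invariant_measuresD(2)[OF inv]
  have lam_nonneg: "\<And>i. i \<in> {..CARD('d)} \<Longrightarrow> 0 \<le> lam i"
    using lam(1) by (simp add: less_imp_le)
  have "mixture_measure {..CARD('d)} lam \<nu> \<in> invariant_measures T"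
    using inv lam_nonneg lam(2) T by (intro mixture_measure_in_invariant_measures) auto
  moreover have "rot_vec \<phi> (mixture_measure {..CARD('d)} lam \<nu>) =
      (\<Sum>i\<le>CARD('d). lam i *\<^sub>R rot_vec \<phi> (\<nu> i))"
    by (rule rot_vec_mixture_measure[OF assms(1,3)]) (use sets prob lam_nonneg lam(2) in auto)
  moreover have "emeasure (mixture_measure {..CARD('d)} lam \<nu>) A =
      (\<Sum>i\<le>CARD('d). ennreal (lam i) * emeasure (\<nu> i) A)" if "A \<in> sets borel" for A
    by (rule emeasure_mixture_measure) (use sets that in auto)
  then have "mixture_measure {..CARD('d)} lam \<nu> \<in> N_set T \<phi>"
    unfolding N_set_def using \<nu> lam by (intro CollectI exI[of _ \<nu>] exI[of _ lam]) auto
  ultimately show ?thesis using lam(3) by (simp add: rot_preimage_def)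
qed

lemma exists_invariant_measures_at_simplex_vertices:
  fixes T :: "'a::metric_space \<Rightarrow> 'a" and \<phi> :: "'a \<Rightarrow> real ^ 'd"
  assumes "h \<in> interior (Rot T \<phi>)"
  shows "\<exists>R>0. \<exists>m. \<forall>i. m i \<in> invariant_measures T \<and> rot_vec \<phi> (m i) = h + R *\<^sub>R simplex_vertex idx i"
proof -
  obtain r where "0 < r" "ball h r \<subseteq> Rot T \<phi>" using assms mem_interior by blast
  define R where "R = r / (2 * CARD('d))"
  have "0 < R" using \<open>0 < r\<close> by (simp add: R_def)
  have target: "h + R *\<^sub>R simplex_vertex idx i \<in> Rot T \<phi>" for i
  proof -
    have "norm (R *\<^sub>R simplex_vertex idx i) \<le> R * CARD('d)"
      using norm_simplex_vertex_le[of idx i] \<open>0 < R\<close> by (simp add: mult_left_mono)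
    also have "\<dots> < r" using \<open>0 < r\<close> by (simp add: R_def)
    finally show ?thesis using \<open>ball h r \<subseteq> Rot T \<phi>\<close> by (auto simp: dist_norm)
  qed
  have "\<exists>M\<in>invariant_measures T. rot_vec \<phi> M = h + R *\<^sub>R simplex_vertex idx i" for i
    using target[of i] by (auto simp: Rot_def image_iff)
  then have "\<forall>i. \<exists>M. M \<in> invariant_measures T \<and> rot_vec \<phi> M = h + R *\<^sub>R simplex_vertex idx i"
    by blast
  with \<open>0 < R\<close> show ?thesis by (metis choice)
qed

lemma exists_invariant_measures_near_shifted_simplex:
  fixes T :: "'a::metric_space \<Rightarrow> 'a" and \<phi> :: "'a \<Rightarrow> real ^ 'd"
    and F :: "('a \<Rightarrow> real) set" and \<delta> :: real
  assumes compact: "compact (UNIV :: 'a set)" and T: "T \<in> borel_measurable borel"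
    and \<phi>: "continuous_on UNIV \<phi>" and \<mu>: "\<mu> \<in> rot_preimage T \<phi> h"
    and h: "h \<in> interior (Rot T \<phi>)"
    and F: "finite F" "\<forall>f\<in>F. continuous_on UNIV f" and "0 < \<delta>"
  shows "\<exists>s>0. \<exists>\<rho>. \<forall>i\<le>CARD('d). \<rho> i \<in> invariant_measures T \<and>
    rot_vec \<phi> (\<rho> i) = h + s *\<^sub>R simplex_vertex idx i \<and>
    (\<forall>f\<in>F. \<bar>integral\<^sup>L (\<rho> i) f - integral\<^sup>L \<mu> f\<bar> < \<delta>)"
proof -
  have \<mu>_inv: "\<mu> \<in> invariant_measures T" and "rot_vec \<phi> \<mu> = h"
    using \<mu> by (auto simp: rot_preimage_def)
  obtain R m where "0 < R" and m: "\<And>i. m i \<in> invariant_measures T"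
    "\<And>i. rot_vec \<phi> (m i) = h + R *\<^sub>R simplex_vertex idx i"
    using exists_invariant_measures_at_simplex_vertices[OF h] by blast
  \<comment> \<open>Mixing \<open>\<mu>\<close> with a small amount \<open>t\<close> of \<open>m i\<close> moves the integrals by \<open>t (\<integral>f dm\<^sub>i - \<integral>f d\<mu>)\<close>.\<close>
  have "\<forall>\<^sub>F t in at_right 0. t \<in> {0<..<1} \<and>
      (\<forall>i\<in>{..CARD('d)}. \<forall>f\<in>F. \<bar>t * (integral\<^sup>L (m i) f - integral\<^sup>L \<mu> f)\<bar> < \<delta>)"
  proof (intro eventually_conj eventually_at_right_real eventually_ball_finite ballI)
    fix i and f :: "'a \<Rightarrow> real"
    have "((\<lambda>t. t * (integral\<^sup>L (m i) f - integral\<^sup>L \<mu> f)) \<longlongrightarrow>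
        0 * (integral\<^sup>L (m i) f - integral\<^sup>L \<mu> f)) (at_right 0)"
      by (intro tendsto_mult tendsto_ident_at tendsto_const)
    from tendstoD[OF this \<open>0 < \<delta>\<close>]
    show "\<forall>\<^sub>F t in at_right 0. \<bar>t * (integral\<^sup>L (m i) f - integral\<^sup>L \<mu> f)\<bar> < \<delta>"
      by (simp add: dist_real_def)
  qed (use F in auto)
  from eventually_happens[OF this] obtain t where t: "0 < t" "t < 1"
    and close: "\<forall>i\<in>{..CARD('d)}. \<forall>f\<in>F. \<bar>t * (integral\<^sup>L (m i) f - integral\<^sup>L \<mu> f)\<bar> < \<delta>"
    by auto
  note \<mu>_meas = invariant_measuresD[OF \<mu>_inv] and m_meas = invariant_measuresD[OF m(1)]
  show ?thesis
  proof (intro exI[of _ "t * R"] conjI exI[of _ "\<lambda>i. convex_mixture t \<mu> (m i)"] allI impI ballI)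
    show "0 < t * R" using t \<open>0 < R\<close> by simp
    fix i assume "i \<le> CARD('d)"
    show "convex_mixture t \<mu> (m i) \<in> invariant_measures T"
      using \<mu>_inv m(1) t T by (intro convex_mixture_in_invariant_measures) auto
    show "rot_vec \<phi> (convex_mixture t \<mu> (m i)) = h + (t * R) *\<^sub>R simplex_vertex idx i"
      using t \<open>rot_vec \<phi> \<mu> = h\<close> m(2)
      by (simp add: rot_vec_convex_mixture[OF compact \<phi> \<mu>_meas m_meas] algebra_simps)
    fix f assume "f \<in> F"
    then have "integral\<^sup>L (convex_mixture t \<mu> (m i)) f - integral\<^sup>L \<mu> f =
        t * (integral\<^sup>L (m i) f - integral\<^sup>L \<mu> f)"
      using t F(2) by (simp add: integral_convex_mixture[OF compact _ \<mu>_meas m_meas] algebra_simps)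
    then show "\<bar>integral\<^sup>L (convex_mixture t \<mu> (m i)) f - integral\<^sup>L \<mu> f\<bar> < \<delta>"
      using close \<open>i \<le> CARD('d)\<close> \<open>f \<in> F\<close> by simp
  qed
qed

lemma exists_periodic_measures_near_shifted_simplex:
  fixes T :: "'a::metric_space \<Rightarrow> 'a" and \<phi> :: "'a \<Rightarrow> real ^ 'd"
    and F :: "('a \<Rightarrow> real) set" and \<delta> :: real
  assumes compact: "compact (UNIV :: 'a set)" and T: "T \<in> borel_measurable borel"
    and \<phi>: "continuous_on UNIV \<phi>" and \<mu>: "\<mu> \<in> rot_preimage T \<phi> h"
    and h: "h \<in> interior (Rot T \<phi>)"
    and dense: "invariant_measures T \<subseteq> weak_star_topology closure_of periodic_measures T"
    and F: "finite F" "\<forall>f\<in>F. continuous_on UNIV f" and "0 < \<delta>"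
  shows "\<exists>s>0. \<exists>\<nu>. \<forall>i\<le>CARD('d). \<nu> i \<in> periodic_measures T \<and>
    norm (rot_vec \<phi> (\<nu> i) - (h + s *\<^sub>R simplex_vertex idx i)) \<le> s / (2 * real CARD('d) * (real CARD('d) + 1)) \<and>
    (\<forall>f\<in>F. \<bar>integral\<^sup>L (\<nu> i) f - integral\<^sup>L \<mu> f\<bar> < \<delta>)"
proof -
  obtain s \<rho> where "0 < s" and \<rho>: "\<And>i. i \<le> CARD('d) \<Longrightarrow> \<rho> i \<in> invariant_measures T \<and>
      rot_vec \<phi> (\<rho> i) = h + s *\<^sub>R simplex_vertex idx i \<and>
      (\<forall>f\<in>F. \<bar>integral\<^sup>L (\<rho> i) f - integral\<^sup>L \<mu> f\<bar> < \<delta> / 2)"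
    using exists_invariant_measures_near_shifted_simplex[OF compact T \<phi> \<mu> h F, of "\<delta> / 2" idx]
      \<open>0 < \<delta>\<close> by auto
  define G where "G = F \<union> range (\<lambda>j x. \<phi> x $ j)"
  define tol where "tol = s / (2 * real CARD('d) * (real CARD('d) + 1))"
  define \<eta> where "\<eta> = min (\<delta> / 2) (tol / CARD('d))"
  have "0 < 2 * real CARD('d) * (real CARD('d) + 1)" by (intro mult_pos_pos) auto
  then have "0 < \<eta>" using \<open>0 < s\<close> \<open>0 < \<delta>\<close> by (simp add: \<eta>_def tol_def)
  have G: "finite G" "\<forall>f\<in>G. continuous_on UNIV f"
    using F continuous_on_component[OF \<phi>] by (auto simp: G_def)
  have "\<exists>\<nu>\<in>periodic_measures T. \<forall>f\<in>G. \<bar>integral\<^sup>L \<nu> f - integral\<^sup>L (\<rho> i) f\<bar> < \<eta>"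
    if "i \<le> CARD('d)" for i
  proof -
    have "\<rho> i \<in> weak_star_topology closure_of periodic_measures T"
      using dense \<rho>[OF that] by blast
    then show ?thesis using G \<open>0 < \<eta>\<close> by (rule in_weak_star_closure_ofD)
  qed
  then have "\<forall>i. \<exists>\<nu>. i \<le> CARD('d) \<longrightarrow>
      \<nu> \<in> periodic_measures T \<and> (\<forall>f\<in>G. \<bar>integral\<^sup>L \<nu> f - integral\<^sup>L (\<rho> i) f\<bar> < \<eta>)"
    by blast
  from choice[OF this] obtain \<nu> where \<nu>: "\<And>i. i \<le> CARD('d) \<Longrightarrow> \<nu> i \<in> periodic_measures T"
    "\<And>i f. i \<le> CARD('d) \<Longrightarrow> f \<in> G \<Longrightarrow> \<bar>integral\<^sup>L (\<nu> i) f - integral\<^sup>L (\<rho> i) f\<bar> < \<eta>"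
    by blast
  show ?thesis
  proof (intro exI[of _ s] conjI exI[of _ \<nu>] allI impI ballI \<open>0 < s\<close>)
    fix i assume i: "i \<le> CARD('d)"
    show "\<nu> i \<in> periodic_measures T" using \<nu>(1)[OF i] .
    have "norm (rot_vec \<phi> (\<nu> i) - rot_vec \<phi> (\<rho> i)) \<le> CARD('d) * \<eta>"
      using \<nu>(2)[OF i] by (intro norm_rot_vec_diff_le less_imp_le) (simp add: G_def)
    also have "\<dots> \<le> CARD('d) * (tol / CARD('d))"
      by (intro mult_left_mono) (auto simp: \<eta>_def)
    also have "\<dots> = tol" by simp
    finally show "norm (rot_vec \<phi> (\<nu> i) - (h + s *\<^sub>R simplex_vertex idx i))
        \<le> s / (2 * real CARD('d) * (real CARD('d) + 1))"
      using \<rho>[OF i] by (simp add: tol_def)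
    fix f assume "f \<in> F"
    then have "\<bar>integral\<^sup>L (\<nu> i) f - integral\<^sup>L (\<rho> i) f\<bar> < \<delta> / 2"
      and "\<bar>integral\<^sup>L (\<rho> i) f - integral\<^sup>L \<mu> f\<bar> < \<delta> / 2"
      using \<nu>(2)[OF i] \<rho>[OF i] by (auto simp: G_def \<eta>_def)
    then show "\<bar>integral\<^sup>L (\<nu> i) f - integral\<^sup>L \<mu> f\<bar> < \<delta>" by linarith
  qed
qed

theorem mainTheorem3:
  fixes T :: "'a::metric_space \<Rightarrow> 'a" and \<phi> :: "'a \<Rightarrow> real ^ 'd" and h :: "real ^ 'd"
  assumes "compact (UNIV :: 'a set)"
    and "continuous_on UNIV T"
    and "invariant_measures T \<subseteq> weak_star_topology closure_of periodic_measures T"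
    and "continuous_on UNIV \<phi>"
    and "h \<in> interior (Rot T \<phi>)"
  shows "rot_preimage T \<phi> h \<subseteq>
           weak_star_topology closure_of (rot_preimage T \<phi> h \<inter> N_set T \<phi>)"
proof
  fix \<mu> assume \<mu>: "\<mu> \<in> rot_preimage T \<phi> h"
  have T: "T \<in> borel_measurable borel"
    using assms(2) by (rule borel_measurable_continuous_onI)
  obtain idx :: "nat \<Rightarrow> 'd" where idx: "bij_betw idx {..<CARD('d)} UNIV"
    using ex_bij_betw_nat_finite[of "UNIV :: 'd set"] by (auto simp: atLeast0LessThan)
  show "\<mu> \<in> weak_star_topology closure_of (rot_preimage T \<phi> h \<inter> N_set T \<phi>)"
  proof (rule in_weak_star_closure_ofI)
    fix F :: "('a \<Rightarrow> real) set" and \<delta> :: real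
    assume F: "finite F" "\<forall>f\<in>F. continuous_on UNIV f" "0 < \<delta>"
    obtain s \<nu> where "0 < s" and \<nu>: "\<And>i. i \<le> CARD('d) \<Longrightarrow> \<nu> i \<in> periodic_measures T \<and>
        norm (rot_vec \<phi> (\<nu> i) - (h + s *\<^sub>R simplex_vertex idx i)) \<le> s / (2 * real CARD('d) * (real CARD('d) + 1)) \<and>
        (\<forall>f\<in>F. \<bar>integral\<^sup>L (\<nu> i) f - integral\<^sup>L \<mu> f\<bar> < \<delta>)"
      using exists_periodic_measures_near_shifted_simplex[OF assms(1) T assms(4) \<mu> assms(5,3) F] by blast
    have "norm (rot_vec \<phi> (\<nu> i) - (h + s *\<^sub>R simplex_vertex idx i))
        \<le> s / (2 * real CARD('d) * (real CARD('d) + 1))" if "i \<le> CARD('d)" for i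
      using \<nu>[OF that] by blast
    from barycentric_coords_near_simplex[OF idx \<open>0 < s\<close> this]
    obtain lam where lam: "\<forall>i\<le>CARD('d). 0 < lam i" "(\<Sum>i\<le>CARD('d). lam i) = 1"
      "(\<Sum>i\<le>CARD('d). lam i *\<^sub>R rot_vec \<phi> (\<nu> i)) = h"
      "span {rot_vec \<phi> (\<nu> i) - rot_vec \<phi> (\<nu> CARD('d)) | i. i < CARD('d)} = UNIV"
      by blast
    have inv: "\<And>i. i \<le> CARD('d) \<Longrightarrow> \<nu> i \<in> invariant_measures T"
      using \<nu> by (simp add: periodic_measures_def)
    have "\<forall>f\<in>F. \<bar>integral\<^sup>L (mixture_measure {..CARD('d)} lam \<nu>) f - integral\<^sup>L \<mu> f\<bar> < \<delta>"
      using F(2) \<nu> lam(1,2) invariant_measuresD[OF inv]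
      by (intro ballI integral_mixture_measure_dist_less[OF assms(1)]) (auto simp: less_imp_le)
    moreover have "mixture_measure {..CARD('d)} lam \<nu> \<in> rot_preimage T \<phi> h \<inter> N_set T \<phi>"
      by (rule mixture_of_periodic_measures_in_N_set[OF assms(1) T assms(4)]) (use \<nu> lam in auto)
    ultimately show "\<exists>N\<in>rot_preimage T \<phi> h \<inter> N_set T \<phi>. \<forall>f\<in>F. \<bar>integral\<^sup>L N f - integral\<^sup>L \<mu> f\<bar> < \<delta>"
      by blast
  qed
qed

end
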